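(* Let $\varepsilon>0$. The equilibrium point $$\overline{\mathbf x_0}=\Big(-\frac{a}{a_1},-\frac{b}{a_2},-\frac{c}{a_3}\Big)$$ of the $\varepsilon$-revised system $$\dot{\mathbf x}=\mathbf x\times\mathbf m(\mathbf x)+\varepsilon[(\mathbf x\times\mathbf m(\mathbf x))\times\mathbf m(\mathbf x)]$$ is Lyapunov stable.
   Context: Fix constants $0<a_1<a_2<a_3$ and $a,b,c\in\mathbb R$. Set $\mathbf m(\mathbf x)=(a_1x^1+a,\ a_2x^2+b,\ a_3x^3+c)$; $\times$ is the cross product in $\mathbb R^3$. Note that $\mathbf m(\overline{\mathbf x_0})=\mathbf 0$. *)

theory Defs
  imports "HOL-Analysis.Analysis"
begin

definition mfield :: "real \<Rightarrow> real \<Rightarrow> real \<Rightarrow> real \<Rightarrow> real \<Rightarrow> real \<Rightarrow> real^3 \<Rightarrow> real^3" where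
  "mfield a1 a2 a3 a b c x = vector [a1 * x$1 + a, a2 * x$2 + b, a3 * x$3 + c]"

definition revised_field :: "real \<Rightarrow> real \<Rightarrow> real \<Rightarrow> real \<Rightarrow> real \<Rightarrow> real \<Rightarrow> real \<Rightarrow> real^3 \<Rightarrow> real^3" where
  "revised_field a1 a2 a3 a b c eps x =
     cross3 x (mfield a1 a2 a3 a b c x)
     + eps *\<^sub>R cross3 (cross3 x (mfield a1 a2 a3 a b c x)) (mfield a1 a2 a3 a b c x)"

definition is_solution_on :: "(real^3 \<Rightarrow> real^3) \<Rightarrow> (real \<Rightarrow> real^3) \<Rightarrow> real \<Rightarrow> bool" where
  "is_solution_on f x T \<longleftrightarrow>
     (\<forall>t\<in>{0..T}. (x has_vector_derivative f (x t)) (at t within {0..T}))"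

definition lyapunov_stable :: "(real^3 \<Rightarrow> real^3) \<Rightarrow> real^3 \<Rightarrow> bool" where
  "lyapunov_stable f x0 \<longleftrightarrow>
     (\<forall>e>0. \<exists>d>0. \<forall>x T. is_solution_on f x T \<and> norm (x 0 - x0) < d \<longrightarrow>
        (\<forall>t\<in>{0..T}. norm (x t - x0) < e))"

end

theory Submission
  imports Defs
begin

text \<open>The field m is half the gradient of
  W(z) = a1 (z1 + a/a1)^2 + a2 (z2 + b/a2)^2 + a3 (z3 + c/a3)^2, a positive definite quadratic
  form in z - x0 with eigenvalues a1, a2, a3. Both terms of the revised field are cross products
  with m, hence orthogonal to the gradient of W, so W is a first integral. A solution therefore
  stays on a level set of W, and a1 |z - x0|^2 \<le> W(z) \<le> a3 |z - x0|^2 yields stability.\<close>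

lemma norm3_squared: "(norm (z::real^3))^2 = (z$1)^2 + (z$2)^2 + (z$3)^2"
  by (simp add: norm_vec_def L2_set_def sum_3)

lemma conserved_along_solution:
  fixes V :: "real^3 \<Rightarrow> real"
  assumes V_deriv: "\<And>z. (V has_derivative (\<lambda>h. inner (g z) h)) (at z)"
    and orth: "\<And>z. inner (g z) (f z) = 0"
    and sol: "is_solution_on f x T" and t: "t \<in> {0..T}"
  shows "V (x t) = V (x 0)"
proof -
  have "\<exists>k. \<forall>s\<in>{0..T}. V (x s) = k"
  proof (rule has_derivative_zero_constant)
    fix s assume s: "s \<in> {0..T}"
    have "(x has_derivative (\<lambda>r. r *\<^sub>R f (x s))) (at s within {0..T})"
      using sol s unfolding is_solution_on_def has_vector_derivative_def by blast
    from has_derivative_compose[OF this V_deriv]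
    show "((\<lambda>s. V (x s)) has_derivative (\<lambda>h. 0)) (at s within {0..T})"
      by (simp add: orth)
  qed simp
  then show ?thesis
    using t by force
qed

lemma lyapunov_stable_of_conserved_quadratic_bounds:
  fixes V :: "real^3 \<Rightarrow> real"
  assumes "0 < k"
    and lower: "\<And>z. k * (norm (z - x0))^2 \<le> V z"
    and upper: "\<And>z. V z \<le> K * (norm (z - x0))^2"
    and conserved: "\<And>x T t. is_solution_on f x T \<Longrightarrow> t \<in> {0..T} \<Longrightarrow> V (x t) = V (x 0)"
  shows "lyapunov_stable f x0"
  unfolding lyapunov_stable_def
proof (intro allI impI)
  fix e :: real assume "e > 0"
  have "k \<le> K"
    using lower[of "x0 + axis 1 1"] upper[of "x0 + axis 1 1"] by simp
  with \<open>0 < k\<close> have "0 < K" by simp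
  define d where "d = e * sqrt (k / K)"
  have "d > 0"
    using \<open>e > 0\<close> \<open>0 < k\<close> \<open>0 < K\<close> by (simp add: d_def)
  moreover have "norm (x t - x0) < e"
    if "is_solution_on f x T" "norm (x 0 - x0) < d" "t \<in> {0..T}" for x T t
  proof -
    have "k * (norm (x t - x0))^2 \<le> K * (norm (x 0 - x0))^2"
      using lower[of "x t"] upper[of "x 0"] conserved[OF that(1,3)] by simp
    also have "\<dots> < K * d^2"
      using that(2) \<open>0 < K\<close> by (intro mult_strict_left_mono power_strict_mono) auto
    also have "\<dots> = k * e^2"
      using \<open>0 < k\<close> \<open>0 < K\<close> by (simp add: d_def power_mult_distrib)
    finally have "(norm (x t - x0))^2 < e^2"
      using \<open>0 < k\<close> by simp
    then show ?thesis
      using \<open>e > 0\<close> by (simp add: power_less_imp_less_base)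
  qed
  ultimately show "\<exists>d>0. \<forall>x T. is_solution_on f x T \<and> norm (x 0 - x0) < d \<longrightarrow>
      (\<forall>t\<in>{0..T}. norm (x t - x0) < e)"
    by blast
qed

definition mfield_energy :: "real \<Rightarrow> real \<Rightarrow> real \<Rightarrow> real \<Rightarrow> real \<Rightarrow> real \<Rightarrow> real^3 \<Rightarrow> real" where
  "mfield_energy a1 a2 a3 a b c z =
     a1 * (z$1 + a / a1)^2 + a2 * (z$2 + b / a2)^2 + a3 * (z$3 + c / a3)^2"

lemma inner_mfield_revised_field:
  "inner (mfield a1 a2 a3 a b c z) (revised_field a1 a2 a3 a b c eps z) = 0"
  unfolding revised_field_def
  by (simp add: inner_add_right dot_cross_self)

lemma has_derivative_mfield_energy:
  assumes "a1 \<noteq> 0" "a2 \<noteq> 0" "a3 \<noteq> 0"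
  shows "(mfield_energy a1 a2 a3 a b c has_derivative
           (\<lambda>h. inner (2 *\<^sub>R mfield a1 a2 a3 a b c z) h)) (at z)"
proof -
  have nth: "((\<lambda>x. x$i) has_derivative (\<lambda>h. h$i)) (at z)" for i :: 3
    by (simp add: bounded_linear_imp_has_derivative bounded_linear_vec_nth)
  show ?thesis
    unfolding mfield_energy_def [abs_def]
    by (rule derivative_eq_intros nth refl)+
      (use assms in \<open>simp add: fun_eq_iff mfield_def inner_vec_def sum_3 algebra_simps\<close>)
qed

lemma mfield_energy_bounds:
  fixes a1 a2 a3 a b c :: real
  assumes "0 < a1" "a1 \<le> a2" "a2 \<le> a3"
  defines "x0 \<equiv> vector [- a / a1, - b / a2, - c / a3] :: real^3"
  shows "a1 * (norm (z - x0))^2 \<le> mfield_energy a1 a2 a3 a b c z"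
    and "mfield_energy a1 a2 a3 a b c z \<le> a3 * (norm (z - x0))^2"
proof -
  have norm_eq: "(norm (z - x0))^2 = (z$1 + a / a1)^2 + (z$2 + b / a2)^2 + (z$3 + c / a3)^2"
    by (simp add: norm3_squared x0_def)
  have mono: "a1 * r^2 \<le> a2 * r^2" "a2 * r^2 \<le> a3 * r^2" for r :: real
    using assms(2,3) by (auto intro: mult_right_mono)
  show "a1 * (norm (z - x0))^2 \<le> mfield_energy a1 a2 a3 a b c z"
    using mono(1)[of "z$2 + b / a2"] mono(1)[of "z$3 + c / a3"] mono(2)[of "z$3 + c / a3"]
    unfolding mfield_energy_def norm_eq by (simp add: algebra_simps)
  show "mfield_energy a1 a2 a3 a b c z \<le> a3 * (norm (z - x0))^2"
    using mono(1)[of "z$1 + a / a1"] mono(2)[of "z$1 + a / a1"] mono(2)[of "z$2 + b / a2"]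
    unfolding mfield_energy_def norm_eq by (simp add: algebra_simps)
qed

theorem theorem6p2:
  fixes a1 a2 a3 a b c eps :: real
  assumes "0 < a1" and "a1 < a2" and "a2 < a3" and "eps > 0"
  shows "lyapunov_stable (revised_field a1 a2 a3 a b c eps)
           (vector [- a / a1, - b / a2, - c / a3])"
proof -
  have conserved: "mfield_energy a1 a2 a3 a b c (x t) = mfield_energy a1 a2 a3 a b c (x 0)"
    if "is_solution_on (revised_field a1 a2 a3 a b c eps) x T" "t \<in> {0..T}" for x T t
    using assms
    by (intro conserved_along_solution[OF has_derivative_mfield_energy _ that])
      (auto simp: inner_mfield_revised_field)
  from assms have "0 < a1" "a1 \<le> a2" "a2 \<le> a3"
    by simp_all
  from lyapunov_stable_of_conserved_quadratic_bounds
    [OF \<open>0 < a1\<close> mfield_energy_bounds[OF this] conserved]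
  show ?thesis .
qed

end
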